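(* Under Rayleigh fading, for every target rate $r>0$, $P_{\rm r}>0$ and $\mathcal C_x\in[0,1)$, \[ \mathcal P_{\rm E-E}(P_{\rm r},\mathcal C_x)\le 1-\frac{\exp\!\left(-\left(\frac{\Psi_r(\mathcal C_x)}{P_{\rm r}\pi_{\rm rd}(1-\mathcal C_x^2)}+\frac{P_{\rm r}\pi_{\rm rr}+1}{P_{\rm s}\pi_{\rm sr}}\Psi_r(\alpha\mathcal C_x)\right)\right)}{P_{\rm s}\pi_{\rm sd}\frac{\Psi_r(\mathcal C_x)}{P_{\rm r}\pi_{\rm rd}(1-\mathcal C_x^2)}+1}=:\mathcal P^{\rm UB}_{\rm E-E,RF}(P_{\rm r},\mathcal C_x), \qquad\alpha=\frac{P_{\rm r}\pi_{\rm rr}}{P_{\rm r}\pi_{\rm rr}+1}. \]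
   Context: Let $P_{\rm s}>0$, $P_{\rm r}>0$ be the source and relay transmit powers. Rayleigh fading: $g_{\rm sr},g_{\rm rr},g_{\rm rd},g_{\rm sd}$ are mutually independent exponential random variables with means $\pi_{\rm sr},\pi_{\rm rr},\pi_{\rm rd},\pi_{\rm sd}>0$. For $\mathcal C_x\in[0,1)$ define $R_{\rm sr}(P_{\rm r},\mathcal C_x)=\tfrac12\log_2\frac{(P_{\rm s}g_{\rm sr}+P_{\rm r}g_{\rm rr}+1)^2-(P_{\rm r}g_{\rm rr}\mathcal C_x)^2}{(P_{\rm r}g_{\rm rr}+1)^2-(P_{\rm r}g_{\rm rr}\mathcal C_x)^2}$ and $R_{\rm rd}(P_{\rm r},\mathcal C_x)=\tfrac12\log_2\frac{(P_{\rm r}g_{\rm rd}+P_{\rm s}g_{\rm sd}+1)^2-(P_{\rm r}g_{\rm rd}\mathcal C_x)^2}{(P_{\rm s}g_{\rm sd}+1)^2}$. For a target rate $r>0$ put $\gamma=2^{2r}-1$ and $\Psi_r(x)=\sqrt{1+\gamma(1-x^2)}-1$. The end-to-end outage probability is $\mathcal P_{\rm E-E}=\mathbb P\{\min(R_{\rm sr},R_{\rm rd})<r\}$. *)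

theory Defs
  imports "HOL-Probability.Probability"
begin

text \<open>Achievable rates (Cx is the correlation coefficient).\<close>
definition R_sr :: "real \<Rightarrow> real \<Rightarrow> real \<Rightarrow> real \<Rightarrow> real \<Rightarrow> real" where
  "R_sr Ps Pr Cx gsr grr =
     1/2 * log 2 (((Ps * gsr + Pr * grr + 1)^2 - (Pr * grr * Cx)^2) /
                  ((Pr * grr + 1)^2 - (Pr * grr * Cx)^2))"

definition R_rd :: "real \<Rightarrow> real \<Rightarrow> real \<Rightarrow> real \<Rightarrow> real \<Rightarrow> real" where
  "R_rd Ps Pr Cx grd gsd =
     1/2 * log 2 (((Pr * grd + Ps * gsd + 1)^2 - (Pr * grd * Cx)^2) /
                  ((Ps * gsd + 1)^2))"

definition Psi :: "real \<Rightarrow> real \<Rightarrow> real" where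
  "Psi r x = sqrt (1 + (2 powr (2 * r) - 1) * (1 - x^2)) - 1"

definition P_UB :: "real \<Rightarrow> real \<Rightarrow> real \<Rightarrow> real \<Rightarrow> real \<Rightarrow> real \<Rightarrow> real \<Rightarrow> real \<Rightarrow> real" where
  "P_UB r Ps Pr Cx \<pi>sr \<pi>rr \<pi>rd \<pi>sd =
     (let \<alpha> = Pr * \<pi>rr / (Pr * \<pi>rr + 1);
          T = Psi r Cx / (Pr * \<pi>rd * (1 - Cx^2))
      in 1 - exp (- (T + (Pr * \<pi>rr + 1) / (Ps * \<pi>sr) * Psi r (\<alpha> * Cx)))
             / (Ps * \<pi>sd * T + 1))"

end

theory Submission
  imports Defs
begin

text \<open>With \<open>G = P\<^sub>r g\<^sub>r\<^sub>r\<close>, the source-relay rate reaches \<open>r\<close> exactly when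
  \<open>P\<^sub>s g\<^sub>s\<^sub>r > (G + 1) \<Psi>\<^sub>r (G / (G + 1) C\<^sub>x)\<close>, and the relay-destination rate reaches \<open>r\<close> as soon as
  \<open>P\<^sub>r g\<^sub>r\<^sub>d (1 - C\<^sub>x\<^sup>2) > \<Psi>\<^sub>r(C\<^sub>x) (P\<^sub>s g\<^sub>s\<^sub>d + 1)\<close>. These two events depend on disjoint pairs of
  independent gains, so the outage probability is at most one minus the product of their probabilities.
  Conditioning on \<open>g\<^sub>s\<^sub>d\<close>, the second probability is the Laplace transform of an exponential variable.
  Conditioning on \<open>g\<^sub>r\<^sub>r\<close>, the first is \<open>E exp (-\<phi> g\<^sub>r\<^sub>r)\<close> with \<open>\<phi>\<close> concave (the square root of a
  quadratic form minus a linear term), so Jensen's inequality bounds it below by its value at the mean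
  \<open>\<pi>\<^sub>r\<^sub>r\<close>.\<close>

lemma le_half_log2_iff:
  fixes r x :: real
  assumes "0 < x"
  shows "r \<le> 1/2 * log 2 x \<longleftrightarrow> 2 powr (2 * r) \<le> x"
  using le_log_iff[of 2 x "2 * r"] assms by auto

lemma sqrt_mult_le_lorentz:
  fixes a b p1 q1 p2 q2 :: real
  assumes "0 \<le> a" "0 \<le> b" "0 \<le> a*p1*p2 - b*q1*q2"
  shows "sqrt (a*p1^2 - b*q1^2) * sqrt (a*p2^2 - b*q2^2) \<le> a*p1*p2 - b*q1*q2"
proof -
  have "(a*p1^2 - b*q1^2) * (a*p2^2 - b*q2^2) = (a*p1*p2 - b*q1*q2)^2 - a*b*(p1*q2 - p2*q1)^2"
    by (simp add: power2_eq_square algebra_simps)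
  also have "\<dots> \<le> (a*p1*p2 - b*q1*q2)^2"
    using assms by simp
  finally have "sqrt ((a*p1^2 - b*q1^2) * (a*p2^2 - b*q2^2)) \<le> sqrt ((a*p1*p2 - b*q1*q2)^2)"
    by (rule real_sqrt_le_mono)
  then show ?thesis
    using assms(3) by (simp add: real_sqrt_mult)
qed

lemma sqrt_quadratic_le_tangent:
  fixes a b g G :: real
  assumes b: "0 \<le> b" "b \<le> a" and a: "0 < a" and g: "0 \<le> g" and G: "0 \<le> G"
  defines "Q \<equiv> \<lambda>x. a*(x+1)^2 - b*x^2"
  shows "sqrt (Q G) \<le> sqrt (Q g) + (a*(g+1) - b*g) / sqrt (Q g) * (G - g)"
proof -
  have "a*(g+1)^2 - a*g^2 \<le> Q g"
    using b by (simp add: Q_def mult_right_mono)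
  moreover have "0 < a*(g+1)^2 - a*g^2"
    using a g by (simp add: power2_eq_square algebra_simps add_pos_nonneg)
  ultimately have S: "0 < sqrt (Q g)"
    by simp
  have "b*G*g \<le> a*(G*g)"
    using b G g by (simp add: mult.assoc mult_right_mono)
  also have "\<dots> \<le> a*((G+1)*(g+1))"
    using a G g by (intro mult_left_mono) (auto simp: algebra_simps)
  finally have "sqrt (Q G) * sqrt (Q g) \<le> a*(G+1)*(g+1) - b*G*g"
    unfolding Q_def using a b by (intro sqrt_mult_le_lorentz) (auto simp: mult.assoc)
  also have "\<dots> = Q g + (a*(g+1) - b*g) * (G - g)"
    by (simp add: Q_def power2_eq_square algebra_simps)
  also have "\<dots> = (sqrt (Q g) + (a*(g+1) - b*g) / sqrt (Q g) * (G - g)) * sqrt (Q g)"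
    using S by (simp add: field_simps)
  finally show ?thesis
    using S by simp
qed

lemma Psi_nonneg:
  assumes "0 \<le> r" "x^2 \<le> 1"
  shows "0 \<le> Psi r x"
  using assms by (simp add: Psi_def ge_one_powr_ge_zero)

definition source_relay_threshold :: "real \<Rightarrow> real \<Rightarrow> real \<Rightarrow> real" where
  "source_relay_threshold r Cx G = (G + 1) * Psi r (G / (G + 1) * Cx)"

lemma borel_measurable_source_relay_threshold[measurable]:
  "source_relay_threshold r Cx \<in> borel_measurable borel"
  unfolding source_relay_threshold_def Psi_def by measurable

lemma source_relay_threshold_eq:
  fixes G :: real
  assumes "0 \<le> G"
  shows "source_relay_threshold r Cx G
       = sqrt (2 powr (2*r) * (G+1)^2 - (2 powr (2*r) - 1) * Cx^2 * G^2) - (G + 1)"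
proof -
  define \<gamma> where "\<gamma> = 2 powr (2*r) - 1"
  have pos: "0 < G + 1"
    using assms by simp
  have "(G+1)^2 * (1 + \<gamma> * (1 - (G / (G+1) * Cx)^2)) = (\<gamma> + 1) * (G+1)^2 - \<gamma> * Cx^2 * G^2"
    using pos by (simp add: power_divide power_mult_distrib field_simps)
  then have "(G+1) * sqrt (1 + \<gamma> * (1 - (G / (G+1) * Cx)^2)) = sqrt ((\<gamma> + 1) * (G+1)^2 - \<gamma> * Cx^2 * G^2)"
    using pos by (metis abs_of_pos real_sqrt_abs real_sqrt_mult)
  then show ?thesis
    by (simp add: source_relay_threshold_def Psi_def \<gamma>_def right_diff_distrib)
qed

lemma source_relay_threshold_nonneg:
  assumes "0 \<le> r" "Cx^2 \<le> 1" "0 \<le> G"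
  shows "0 \<le> source_relay_threshold r Cx G"
proof -
  have "(G / (G + 1))^2 \<le> 1"
    using assms(3) by (simp add: power_le_one)
  then have "(G / (G + 1))^2 * Cx^2 \<le> 1"
    using assms(2) by (intro mult_le_one) auto
  then have "(G / (G + 1) * Cx)^2 \<le> 1"
    by (simp only: power_mult_distrib)
  then show ?thesis
    using assms Psi_nonneg by (simp add: source_relay_threshold_def)
qed

lemma source_relay_threshold_le_tangent:
  fixes r Cx g :: real
  assumes "0 \<le> r" "Cx^2 \<le> 1" "0 \<le> g"
  obtains d where "\<And>G. 0 \<le> G \<Longrightarrow> source_relay_threshold r Cx G \<le> source_relay_threshold r Cx g + d * (G - g)"
proof -
  define a where "a = 2 powr (2*r)"
  define b where "b = (a - 1) * Cx^2"
  have a: "1 \<le> a"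
    using assms by (simp add: a_def ge_one_powr_ge_zero)
  have b: "0 \<le> b" "b \<le> a"
    using a assms by (auto simp: b_def intro: order_trans[OF mult_left_le])
  have eq: "source_relay_threshold r Cx G = sqrt (a*(G+1)^2 - b*G^2) - (G + 1)" if "0 \<le> G" for G
    using source_relay_threshold_eq[OF that] by (simp add: a_def b_def mult.assoc)
  define s where "s = (a*(g+1) - b*g) / sqrt (a*(g+1)^2 - b*g^2)"
  show ?thesis
  proof
    fix G :: real
    assume "0 \<le> G"
    then show "source_relay_threshold r Cx G \<le> source_relay_threshold r Cx g + (s - 1) * (G - g)"
      using sqrt_quadratic_le_tangent[OF b _ \<open>0 \<le> g\<close>, of G] a \<open>0 \<le> g\<close>
      by (simp add: eq s_def left_diff_distrib)
  qed
qed

lemma R_sr_ge: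
  fixes Ps Pr Cx r gsr grr :: real
  assumes Ps: "0 < Ps" and Pr: "0 \<le> Pr" and r: "0 \<le> r" and Cx: "Cx^2 \<le> 1" and grr: "0 \<le> grr"
    and gsr: "source_relay_threshold r Cx (Pr * grr) / Ps < gsr"
  shows "r \<le> R_sr Ps Pr Cx gsr grr"
proof -
  define a where "a = 2 powr (2*r)"
  define G where "G = Pr * grr"
  have G: "0 \<le> G"
    using Pr grr by (simp add: G_def)
  have "(G*Cx)^2 \<le> G^2"
    using Cx by (simp add: power_mult_distrib mult_left_le)
  also have "\<dots> < (G+1)^2"
    using G by (simp add: power_strict_mono)
  finally have D: "0 < (G+1)^2 - (G*Cx)^2"
    by simp
  have "source_relay_threshold r Cx G < Ps * gsr"
    using gsr Ps by (simp add: G_def pos_divide_less_eq mult.commute)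
  then have "sqrt (a*(G+1)^2 - (a-1)*Cx^2*G^2) < Ps*gsr + G + 1"
    unfolding source_relay_threshold_eq[OF G] a_def by simp
  then have "a*(G+1)^2 - (a-1)*Cx^2*G^2 < (Ps*gsr + G + 1)^2"
    by (meson not_le real_le_rsqrt)
  then have "a * ((G+1)^2 - (G*Cx)^2) < (Ps*gsr + G + 1)^2 - (G*Cx)^2"
    by (simp add: algebra_simps power2_eq_square)
  then have "a \<le> ((Ps*gsr + G + 1)^2 - (G*Cx)^2) / ((G+1)^2 - (G*Cx)^2)"
    using D by (simp add: pos_le_divide_eq)
  moreover have "0 < ((Ps*gsr + G + 1)^2 - (G*Cx)^2) / ((G+1)^2 - (G*Cx)^2)"
    using calculation powr_gt_zero[of 2 "2*r"] unfolding a_def by linarith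
  ultimately have "r \<le> 1/2 * log 2 (((Ps*gsr + G + 1)^2 - (G*Cx)^2) / ((G+1)^2 - (G*Cx)^2))"
    by (simp only: le_half_log2_iff a_def)
  then show ?thesis
    by (simp add: R_sr_def G_def)
qed

lemma R_rd_ge:
  fixes Ps Pr Cx r grd gsd :: real
  assumes Ps: "0 \<le> Ps" and Pr: "0 < Pr" and r: "0 \<le> r" and Cx: "Cx^2 < 1" and gsd: "0 \<le> gsd"
    and grd: "Psi r Cx / (Pr * (1 - Cx^2)) * (Ps * gsd + 1) < grd"
  shows "r \<le> R_rd Ps Pr Cx grd gsd"
proof -
  define a where "a = 2 powr (2*r)"
  define c where "c = 1 - Cx^2"
  define A where "A = Ps * gsd + 1"
  define X where "X = Pr * grd"
  define s where "s = sqrt (1 + (a - 1) * c)"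
  have a: "1 \<le> a"
    using r by (simp add: a_def ge_one_powr_ge_zero)
  have c: "0 < c"
    using Cx by (simp add: c_def)
  have A: "1 \<le> A"
    using Ps gsd by (simp add: A_def)
  have s: "1 \<le> s" "s^2 = 1 + (a - 1) * c"
    using a c by (simp_all add: s_def)
  have "(s - 1) / (Pr * c) * A < grd"
    using grd by (simp add: Psi_def s_def a_def c_def A_def)
  then have "(s - 1) * A < c * X"
    using Pr c by (simp add: X_def field_simps)
  then have "(s * A)^2 \<le> (c*X + A)^2"
    using s A by (intro power_mono) (auto simp: algebra_simps)
  moreover have "(s * A)^2 = (1 + (a - 1) * c) * A^2"
    using s(2) by (simp add: power_mult_distrib)
  moreover have "(c*X + A)^2 - (1 + (a - 1) * c) * A^2 = c * ((X + A)^2 - (X*Cx)^2 - a * A^2)"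
    by (simp add: c_def algebra_simps power2_eq_square)
  ultimately have "0 \<le> c * ((X + A)^2 - (X*Cx)^2 - a * A^2)"
    by linarith
  then have "a * A^2 \<le> (X + A)^2 - (X*Cx)^2"
    using c by (simp add: zero_le_mult_iff)
  then have "a \<le> ((X + A)^2 - (X*Cx)^2) / A^2"
    using A by (simp add: pos_le_divide_eq)
  moreover have "0 < ((X + A)^2 - (X*Cx)^2) / A^2"
    using calculation powr_gt_zero[of 2 "2*r"] unfolding a_def by linarith
  ultimately have "r \<le> 1/2 * log 2 (((X + A)^2 - (X*Cx)^2) / A^2)"
    by (simp only: le_half_log2_iff a_def)
  then show ?thesis
    by (simp add: R_rd_def X_def A_def add.commute add.left_commute)
qed

lemma outage_subset:
  fixes \<Omega> :: "'a set" and gsr grr grd gsd :: "'a \<Rightarrow> real"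
  assumes Ps: "0 < Ps" and Pr: "0 < Pr" and r: "0 \<le> r" and Cx: "Cx^2 < 1"
  shows "{\<omega>\<in>\<Omega>. min (R_sr Ps Pr Cx (gsr \<omega>) (grr \<omega>)) (R_rd Ps Pr Cx (grd \<omega>) (gsd \<omega>)) < r}
      \<subseteq> \<Omega> - ({\<omega>\<in>\<Omega>. 0 \<le> grr \<omega> \<and> source_relay_threshold r Cx (Pr * grr \<omega>) / Ps < gsr \<omega>}
           \<inter> {\<omega>\<in>\<Omega>. 0 \<le> gsd \<omega> \<and> Psi r Cx / (Pr * (1 - Cx^2)) * (Ps * gsd \<omega> + 1) < grd \<omega>})"
proof (intro subsetI DiffI notI)
  fix \<omega>
  assume outage: "\<omega> \<in> {\<omega>\<in>\<Omega>. min (R_sr Ps Pr Cx (gsr \<omega>) (grr \<omega>)) (R_rd Ps Pr Cx (grd \<omega>) (gsd \<omega>)) < r}"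
    and "\<omega> \<in> {\<omega>\<in>\<Omega>. 0 \<le> grr \<omega> \<and> source_relay_threshold r Cx (Pr * grr \<omega>) / Ps < gsr \<omega>}
           \<inter> {\<omega>\<in>\<Omega>. 0 \<le> gsd \<omega> \<and> Psi r Cx / (Pr * (1 - Cx^2)) * (Ps * gsd \<omega> + 1) < grd \<omega>}"
  then have "r \<le> R_sr Ps Pr Cx (gsr \<omega>) (grr \<omega>)" "r \<le> R_rd Ps Pr Cx (grd \<omega>) (gsd \<omega>)"
    using R_sr_ge[OF Ps less_imp_le[OF Pr] r less_imp_le[OF Cx]] R_rd_ge[OF less_imp_le[OF Ps] Pr r Cx]
    by blast+
  moreover have "min (R_sr Ps Pr Cx (gsr \<omega>) (grr \<omega>)) (R_rd Ps Pr Cx (grd \<omega>) (gsd \<omega>)) < r"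
    using outage by blast
  ultimately show False
    by linarith
qed simp

lemma has_bochner_integral_exponential_density_affine:
  fixes m c d :: real
  assumes "0 < m"
  shows "has_bochner_integral lborel (\<lambda>x. exponential_density m x * (c + d * x)) (c + d / m)"
proof -
  have "(\<integral>\<^sup>+x. ennreal (exponential_density m x * x ^ k) \<partial>lborel) = ennreal (fact k / m ^ k)" for k
    using nn_integral_erlang_ith_moment[of m 0 k] assms by simp
  then have "has_bochner_integral lborel (\<lambda>x. exponential_density m x * x ^ k) (fact k / m ^ k)" for k
    using assms by (intro has_bochner_integral_nn_integral) (auto simp: exponential_density_def)
  from this[of 0] this[of 1]
  have "has_bochner_integral lborel (\<lambda>x. c * exponential_density m x + d * (exponential_density m x * x)) (c * 1 + d * (1 / m))"
    by (intro has_bochner_integral_add has_bochner_integral_mult_right) auto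
  then show ?thesis
    by (simp add: algebra_simps)
qed

text \<open>Jensen's inequality at the mean \<open>1/m\<close>; no integrability of \<open>g\<close> is needed, since only the
  positive part of the supporting line is integrated.\<close>

lemma nn_integral_exponential_density_ge_tangent:
  fixes m y d :: real and g :: "real \<Rightarrow> real"
  assumes m: "0 < m" and g: "\<And>x. 0 \<le> x \<Longrightarrow> 0 \<le> g x" "\<And>x. 0 \<le> x \<Longrightarrow> y + d * (x - 1/m) \<le> g x"
  shows "ennreal y \<le> (\<integral>\<^sup>+x. ennreal (exponential_density m x * g x) \<partial>lborel)"
proof -
  define L where "L x = y + d * (x - 1/m)" for x
  define f where "f x = exponential_density m x * L x" for x
  define f' where "f' x = exponential_density m x * max 0 (L x)" for x
  have "f = (\<lambda>x. exponential_density m x * ((y - d/m) + d * x))"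
    by (simp add: fun_eq_iff f_def L_def algebra_simps)
  then have f: "has_bochner_integral lborel f y"
    using has_bochner_integral_exponential_density_affine[OF m, of "y - d/m" d] by simp
  have f': "integrable lborel f'"
  proof (rule Bochner_Integration.integrable_bound[OF integrable_norm[OF integrable.intros[OF f]]])
    show "f' \<in> borel_measurable lborel"
      unfolding f'_def L_def by measurable
    show "AE x in lborel. norm (f' x) \<le> norm (norm (f x))"
      by (auto simp: f_def f'_def abs_mult intro!: mult_left_mono)
  qed
  have "y = integral\<^sup>L lborel f"
    using f by (simp add: has_bochner_integral_integral_eq)
  also have "\<dots> \<le> integral\<^sup>L lborel f'"
    using integrable.intros[OF f] f'
    by (rule integral_mono) (auto simp: f_def f'_def m intro!: mult_left_mono exponential_density_nonneg)
  also have "ennreal (integral\<^sup>L lborel f') = (\<integral>\<^sup>+x. ennreal (f' x) \<partial>lborel)"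
    using f' m by (intro nn_integral_eq_integral[symmetric]) (auto simp: f'_def exponential_density_nonneg)
  also have "\<dots> \<le> (\<integral>\<^sup>+x. ennreal (exponential_density m x * g x) \<partial>lborel)"
    using g m by (intro nn_integral_mono ennreal_leI) (auto simp: f'_def L_def exponential_density_def intro!: mult_left_mono)
  finally show ?thesis
    by (simp add: ennreal_leI)
qed

lemma nn_integral_exponential_density_exp_neg_ge:
  fixes m d :: real and h :: "real \<Rightarrow> real"
  assumes m: "0 < m" and h: "\<And>x. 0 \<le> x \<Longrightarrow> h x \<le> h (1/m) + d * (x - 1/m)"
  shows "ennreal (exp (- h (1/m))) \<le> (\<integral>\<^sup>+x. ennreal (exponential_density m x * exp (- h x)) \<partial>lborel)"
proof (rule nn_integral_exponential_density_ge_tangent[OF m])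
  fix x :: real
  assume "0 \<le> x"
  have "exp (- h (1/m)) * (1 - d * (x - 1/m)) \<le> exp (- h (1/m)) * exp (- d * (x - 1/m))"
    using exp_ge_add_one_self[of "- d * (x - 1/m)"] by (intro mult_left_mono) auto
  also have "\<dots> \<le> exp (- h x)"
    using h[OF \<open>0 \<le> x\<close>] by (simp add: mult_exp_exp)
  finally show "exp (- h (1/m)) + - exp (- h (1/m)) * d * (x - 1/m) \<le> exp (- h x)"
    by (simp add: algebra_simps)
qed simp

lemma nn_integral_exponential_density_exp_neg_affine:
  fixes m s c :: real
  assumes m: "0 < m" and s: "0 \<le> s"
  shows "(\<integral>\<^sup>+x. ennreal (exponential_density m x * exp (- (c + s * x))) \<partial>lborel)
       = ennreal (exp (- c) * (m / (m + s)))"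
proof -
  have ms: "0 < m + s"
    using m s by simp
  have "exponential_density m x * exp (- (c + s * x))
      = exp (- c) * (m / (m + s)) * exponential_density (m + s) x" for x
    using ms by (simp add: exponential_density_def mult_exp_exp field_simps)
  then have "(\<integral>\<^sup>+x. ennreal (exponential_density m x * exp (- (c + s * x))) \<partial>lborel)
      = (\<integral>\<^sup>+x. ennreal (exp (- c) * (m / (m + s))) * ennreal (exponential_density (m + s) x) \<partial>lborel)"
    using m ms by (intro nn_integral_cong) (simp add: ennreal_mult[symmetric] exponential_density_nonneg)
  also have "\<dots> = ennreal (exp (- c) * (m / (m + s))) * (\<integral>\<^sup>+x. ennreal (exponential_density (m + s) x) \<partial>lborel)"
    by (rule nn_integral_cmult) simp
  also have "(\<integral>\<^sup>+x. ennreal (exponential_density (m + s) x) \<partial>lborel) = 1"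
    using nn_integral_erlang_ith_moment[of "m + s" 0 0] ms by simp
  finally show ?thesis
    by simp
qed

lemma (in prob_space) emeasure_exponential_gt_fun:
  fixes X Y :: "'a \<Rightarrow> real" and \<phi> :: "real \<Rightarrow> real"
  assumes ind: "indep_var lborel X lborel Y"
    and X: "distributed M lborel X (exponential_density m)"
    and Y: "distributed M lborel Y (exponential_density l)"
    and m: "0 < m" and l: "0 < l"
    and \<phi>[measurable]: "\<phi> \<in> borel_measurable borel" and \<phi>_nonneg: "\<And>x. 0 \<le> x \<Longrightarrow> 0 \<le> \<phi> x"
  shows "emeasure M {\<omega>\<in>space M. 0 \<le> X \<omega> \<and> \<phi> (X \<omega>) < Y \<omega>}
       = (\<integral>\<^sup>+x. ennreal (exponential_density m x * exp (- \<phi> x * l)) \<partial>lborel)"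
proof -
  define S where "S = {p \<in> space (lborel \<Otimes>\<^sub>M lborel). 0 \<le> fst p \<and> \<phi> (fst p) < snd p}"
  have S[measurable]: "S \<in> sets (lborel \<Otimes>\<^sub>M lborel)"
    unfolding S_def by measurable
  have XY: "distributed M (lborel \<Otimes>\<^sub>M lborel) (\<lambda>\<omega>. (X \<omega>, Y \<omega>))
      (\<lambda>(x, y). ennreal (exponential_density m x) * ennreal (exponential_density l y))"
    by (rule distributed_joint_indep[OF _ _ X Y ind]) (auto intro: lborel.sigma_finite_measure_axioms)
  have "{\<omega>\<in>space M. 0 \<le> X \<omega> \<and> \<phi> (X \<omega>) < Y \<omega>} = (\<lambda>\<omega>. (X \<omega>, Y \<omega>)) -` S \<inter> space M"
    by (auto simp: S_def space_pair_measure)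
  then have "emeasure M {\<omega>\<in>space M. 0 \<le> X \<omega> \<and> \<phi> (X \<omega>) < Y \<omega>}
      = (\<integral>\<^sup>+p. ennreal (exponential_density m (fst p)) * ennreal (exponential_density l (snd p)) * indicator S p \<partial>(lborel \<Otimes>\<^sub>M lborel))"
    using distributed_emeasure[OF XY S] by (simp add: case_prod_beta)
  also have "\<dots> = (\<integral>\<^sup>+x. \<integral>\<^sup>+y. ennreal (exponential_density m x) * ennreal (exponential_density l y) * indicator S (x, y) \<partial>lborel \<partial>lborel)"
    by (subst lborel.nn_integral_fst[symmetric]) (auto simp: case_prod_beta)
  also have "\<dots> = (\<integral>\<^sup>+x. ennreal (exponential_density m x * exp (- \<phi> x * l)) \<partial>lborel)"
  proof (rule nn_integral_cong)
    fix x :: real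
    show "(\<integral>\<^sup>+y. ennreal (exponential_density m x) * ennreal (exponential_density l y) * indicator S (x, y) \<partial>lborel)
        = ennreal (exponential_density m x * exp (- \<phi> x * l))"
    proof (cases "0 \<le> x")
      case True
      have "(\<integral>\<^sup>+y. ennreal (exponential_density m x) * ennreal (exponential_density l y) * indicator S (x, y) \<partial>lborel)
          = ennreal (exponential_density m x) * (\<integral>\<^sup>+y. ennreal (exponential_density l y) * indicator {\<phi> x<..} y \<partial>lborel)"
        using True by (subst nn_integral_cmult[symmetric])
          (auto simp: S_def space_pair_measure mult.assoc intro!: nn_integral_cong split: split_indicator)
      also have "(\<integral>\<^sup>+y. ennreal (exponential_density l y) * indicator {\<phi> x<..} y \<partial>lborel)
          = emeasure M {\<omega>\<in>space M. \<phi> x < Y \<omega>}"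
        using distributed_emeasure[OF Y, of "{\<phi> x<..}"] by (simp add: vimage_def Int_def conj_commute)
      also have "\<dots> = ennreal (exp (- \<phi> x * l))"
        using exponential_distributedD_gt[OF Y \<phi>_nonneg[OF True] l] by (simp add: emeasure_eq_measure)
      finally show ?thesis
        using m by (simp add: ennreal_mult exponential_density_nonneg)
    qed (simp add: exponential_density_def)
  qed
  finally show ?thesis .
qed

lemma (in prob_space) indep_var_restrict:
  assumes ind: "indep_vars (\<lambda>_. borel) X I" and K: "K1 \<subseteq> I" "K2 \<subseteq> I" "K1 \<inter> K2 = {}"
  shows "indep_var (PiM K1 (\<lambda>_. borel)) (\<lambda>\<omega>. restrict (\<lambda>i. X i \<omega>) K1)
                   (PiM K2 (\<lambda>_. borel)) (\<lambda>\<omega>. restrict (\<lambda>i. X i \<omega>) K2)"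
proof -
  have "indep_vars (\<lambda>b. PiM (case_bool K1 K2 b) (\<lambda>_. borel))
      (\<lambda>b \<omega>. restrict (\<lambda>i. X i \<omega>) (case_bool K1 K2 b)) UNIV"
    using K by (intro indep_vars_restrict[OF ind]) (auto simp: disjoint_family_on_def split: bool.split)
  moreover have "(\<lambda>b. PiM (case_bool K1 K2 b) (\<lambda>_. borel)) = case_bool (PiM K1 (\<lambda>_. borel)) (PiM K2 (\<lambda>_. borel))"
    "(\<lambda>b \<omega>. restrict (\<lambda>i. X i \<omega>) (case_bool K1 K2 b)) = case_bool (\<lambda>\<omega>. restrict (\<lambda>i. X i \<omega>) K1) (\<lambda>\<omega>. restrict (\<lambda>i. X i \<omega>) K2)"
    by (auto split: bool.split)
  ultimately show ?thesis
    unfolding indep_var_def by metis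
qed

lemma (in prob_space) indep_var_pairs:
  fixes X :: "'i \<Rightarrow> 'a \<Rightarrow> real"
  assumes ind: "indep_vars (\<lambda>_. borel) X I" and "{i, j, k, l} \<subseteq> I" "{i, j} \<inter> {k, l} = {}"
  shows "indep_var (borel \<Otimes>\<^sub>M borel) (\<lambda>\<omega>. (X i \<omega>, X j \<omega>)) (borel \<Otimes>\<^sub>M borel) (\<lambda>\<omega>. (X k \<omega>, X l \<omega>))"
proof -
  have "indep_var (borel \<Otimes>\<^sub>M borel) ((\<lambda>f. (f i, f j)) \<circ> (\<lambda>\<omega>. restrict (\<lambda>i. X i \<omega>) {i, j}))
      (borel \<Otimes>\<^sub>M borel) ((\<lambda>f. (f k, f l)) \<circ> (\<lambda>\<omega>. restrict (\<lambda>i. X i \<omega>) {k, l}))"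
    using assms by (intro indep_var_compose[OF indep_var_restrict[OF ind]])
      (auto intro!: measurable_Pair measurable_component_singleton)
  then show ?thesis
    by (simp add: comp_def)
qed

lemma (in prob_space) indep_var_of_indep_vars:
  fixes X :: "'i \<Rightarrow> 'a \<Rightarrow> real"
  assumes ind: "indep_vars (\<lambda>_. borel) X I" and "i \<in> I" "k \<in> I" "i \<noteq> k"
  shows "indep_var lborel (X i) lborel (X k)"
proof -
  have "indep_var lborel (fst \<circ> (\<lambda>\<omega>. (X i \<omega>, X i \<omega>))) lborel (fst \<circ> (\<lambda>\<omega>. (X k \<omega>, X k \<omega>)))"
    using assms by (intro indep_var_compose[OF indep_var_pairs]) (auto simp: measurable_lborel2)
  then show ?thesis
    by (simp add: comp_def)
qed

lemma (in prob_space) prob_pair_events_indep: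
  fixes X :: "'i \<Rightarrow> 'a \<Rightarrow> real"
  assumes ind: "indep_vars (\<lambda>_. borel) X I" and "{i, j, k, l} \<subseteq> I" "{i, j} \<inter> {k, l} = {}"
    and P: "Measurable.pred (borel \<Otimes>\<^sub>M borel) P" and Q: "Measurable.pred (borel \<Otimes>\<^sub>M borel) Q"
  shows "prob ({\<omega>\<in>space M. P (X i \<omega>, X j \<omega>)} \<inter> {\<omega>\<in>space M. Q (X k \<omega>, X l \<omega>)})
       = prob {\<omega>\<in>space M. P (X i \<omega>, X j \<omega>)} * prob {\<omega>\<in>space M. Q (X k \<omega>, X l \<omega>)}"
proof -
  have sets: "{p\<in>space (borel \<Otimes>\<^sub>M borel). P p} \<in> sets (borel \<Otimes>\<^sub>M borel)"
      "{p\<in>space (borel \<Otimes>\<^sub>M borel). Q p} \<in> sets (borel \<Otimes>\<^sub>M borel)"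
    using P Q by measurable
  have "(\<lambda>\<omega>. ((X i \<omega>, X j \<omega>), (X k \<omega>, X l \<omega>))) -` ({p\<in>space (borel \<Otimes>\<^sub>M borel). P p} \<times> {p\<in>space (borel \<Otimes>\<^sub>M borel). Q p}) \<inter> space M
      = {\<omega>\<in>space M. P (X i \<omega>, X j \<omega>)} \<inter> {\<omega>\<in>space M. Q (X k \<omega>, X l \<omega>)}"
    "(\<lambda>\<omega>. (X i \<omega>, X j \<omega>)) -` {p\<in>space (borel \<Otimes>\<^sub>M borel). P p} \<inter> space M = {\<omega>\<in>space M. P (X i \<omega>, X j \<omega>)}"
    "(\<lambda>\<omega>. (X k \<omega>, X l \<omega>)) -` {p\<in>space (borel \<Otimes>\<^sub>M borel). Q p} \<inter> space M = {\<omega>\<in>space M. Q (X k \<omega>, X l \<omega>)}"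
    by (auto simp: space_pair_measure)
  with indep_varD[OF indep_var_pairs[OF assms(1-3)] sets] show ?thesis
    by simp
qed

lemma (in prob_space) prob_source_relay_success_ge:
  assumes ind: "indep_var lborel grr lborel gsr"
    and gsr: "distributed M lborel gsr (exponential_density (1 / \<pi>sr))"
    and grr: "distributed M lborel grr (exponential_density (1 / \<pi>rr))"
    and \<pi>: "0 < \<pi>sr" "0 < \<pi>rr" and P: "0 < Ps" "0 < Pr" and r: "0 \<le> r" and Cx: "Cx^2 \<le> 1"
  shows "exp (- source_relay_threshold r Cx (Pr * \<pi>rr) / (Ps * \<pi>sr))
       \<le> prob {\<omega>\<in>space M. 0 \<le> grr \<omega> \<and> source_relay_threshold r Cx (Pr * grr \<omega>) / Ps < gsr \<omega>}"
proof -
  define \<phi> where "\<phi> x = source_relay_threshold r Cx (Pr * x) / Ps" for x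
  define h where "h x = \<phi> x * (1 / \<pi>sr)" for x
  obtain d where d: "\<And>G. 0 \<le> G \<Longrightarrow> source_relay_threshold r Cx G \<le> source_relay_threshold r Cx (Pr * \<pi>rr) + d * (G - Pr * \<pi>rr)"
    using source_relay_threshold_le_tangent[OF r Cx, of "Pr * \<pi>rr"] \<pi> P by auto
  have tangent: "h x \<le> h (1 / (1 / \<pi>rr)) + Pr * d / (Ps * \<pi>sr) * (x - 1 / (1 / \<pi>rr))" if "0 \<le> x" for x
    using d[of "Pr * x"] that P \<pi> by (simp add: h_def \<phi>_def divide_right_mono field_simps)
  have "ennreal (exp (- h (1 / (1 / \<pi>rr))))
      \<le> (\<integral>\<^sup>+x. ennreal (exponential_density (1 / \<pi>rr) x * exp (- h x)) \<partial>lborel)"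
    using \<pi> by (intro nn_integral_exponential_density_exp_neg_ge[OF _ tangent]) auto
  also have "\<dots> = emeasure M {\<omega>\<in>space M. 0 \<le> grr \<omega> \<and> \<phi> (grr \<omega>) < gsr \<omega>}"
  proof -
    have "\<phi> \<in> borel_measurable borel"
      unfolding \<phi>_def by measurable
    moreover have "0 \<le> \<phi> x" if "0 \<le> x" for x
      using source_relay_threshold_nonneg[OF r Cx, of "Pr * x"] that P by (simp add: \<phi>_def)
    ultimately show ?thesis
      using \<pi> by (simp add: emeasure_exponential_gt_fun[OF ind grr gsr] h_def)
  qed
  finally show ?thesis
    by (simp add: emeasure_eq_measure h_def \<phi>_def)
qed

lemma (in prob_space) prob_relay_destination_success:
  assumes ind: "indep_var lborel gsd lborel grd"
    and grd: "distributed M lborel grd (exponential_density (1 / \<pi>rd))"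
    and gsd: "distributed M lborel gsd (exponential_density (1 / \<pi>sd))"
    and \<pi>: "0 < \<pi>rd" "0 < \<pi>sd" and Ps: "0 \<le> Ps" and u: "0 \<le> u"
  shows "prob {\<omega>\<in>space M. 0 \<le> gsd \<omega> \<and> u * (Ps * gsd \<omega> + 1) < grd \<omega>}
       = exp (- u / \<pi>rd) / (Ps * \<pi>sd * (u / \<pi>rd) + 1)"
proof -
  have "emeasure M {\<omega>\<in>space M. 0 \<le> gsd \<omega> \<and> u * (Ps * gsd \<omega> + 1) < grd \<omega>}
      = (\<integral>\<^sup>+x. ennreal (exponential_density (1 / \<pi>sd) x * exp (- (u * (Ps * x + 1)) * (1 / \<pi>rd))) \<partial>lborel)"
    using \<pi> Ps u by (intro emeasure_exponential_gt_fun[OF ind gsd grd]) auto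
  also have "\<dots> = (\<integral>\<^sup>+x. ennreal (exponential_density (1 / \<pi>sd) x * exp (- (u / \<pi>rd + u * Ps / \<pi>rd * x))) \<partial>lborel)"
    by (simp add: algebra_simps)
  also have "\<dots> = ennreal (exp (- u / \<pi>rd) / (Ps * \<pi>sd * (u / \<pi>rd) + 1))"
    using \<pi> Ps u by (subst nn_integral_exponential_density_exp_neg_affine) (auto simp: field_simps)
  moreover have "0 < Ps * \<pi>sd * (u / \<pi>rd) + 1"
    using \<pi> Ps u by (simp add: add_nonneg_pos)
  ultimately show ?thesis
    by (simp add: emeasure_eq_measure)
qed

lemma P_UB_eq:
  "P_UB r Ps Pr Cx \<pi>sr \<pi>rr \<pi>rd \<pi>sd
     = 1 - exp (- source_relay_threshold r Cx (Pr * \<pi>rr) / (Ps * \<pi>sr))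
         * (exp (- (Psi r Cx / (Pr * (1 - Cx^2))) / \<pi>rd) / (Ps * \<pi>sd * (Psi r Cx / (Pr * (1 - Cx^2)) / \<pi>rd) + 1))"
proof -
  have "(Pr * \<pi>rr + 1) / (Ps * \<pi>sr) * Psi r (Pr * \<pi>rr / (Pr * \<pi>rr + 1) * Cx)
      = source_relay_threshold r Cx (Pr * \<pi>rr) / (Ps * \<pi>sr)"
    by (simp add: source_relay_threshold_def)
  moreover have "Psi r Cx / (Pr * \<pi>rd * (1 - Cx^2)) = Psi r Cx / (Pr * (1 - Cx^2)) / \<pi>rd"
    by simp
  ultimately show ?thesis
    unfolding P_UB_def Let_def by (simp only: minus_add_distrib exp_add mult.commute times_divide_eq_right minus_divide_left)
qed

theorem theorem4:
  fixes M :: "'a measure"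
    and gsr grr grd gsd :: "'a \<Rightarrow> real"
    and Ps Pr Cx r \<pi>sr \<pi>rr \<pi>rd \<pi>sd :: real
  assumes "prob_space M"
    and "prob_space.indep_vars M (\<lambda>_. borel) (\<lambda>i. [gsr, grr, grd, gsd] ! i) {0..<4}"
    and "distributed M lborel gsr (exponential_density (1 / \<pi>sr))"
    and "distributed M lborel grr (exponential_density (1 / \<pi>rr))"
    and "distributed M lborel grd (exponential_density (1 / \<pi>rd))"
    and "distributed M lborel gsd (exponential_density (1 / \<pi>sd))"
    and "\<pi>sr > 0" "\<pi>rr > 0" "\<pi>rd > 0" "\<pi>sd > 0"
    and "Ps > 0" "Pr > 0" "r > 0" "0 \<le> Cx" "Cx < 1"
  shows "measure M {\<omega> \<in> space M.
            min (R_sr Ps Pr Cx (gsr \<omega>) (grr \<omega>)) (R_rd Ps Pr Cx (grd \<omega>) (gsd \<omega>)) < r}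
         \<le> P_UB r Ps Pr Cx \<pi>sr \<pi>rr \<pi>rd \<pi>sd"
proof -
  interpret prob_space M by fact
  define u where "u = Psi r Cx / (Pr * (1 - Cx^2))"
  define EA where "EA = {\<omega>\<in>space M. 0 \<le> grr \<omega> \<and> source_relay_threshold r Cx (Pr * grr \<omega>) / Ps < gsr \<omega>}"
  define EB where "EB = {\<omega>\<in>space M. 0 \<le> gsd \<omega> \<and> u * (Ps * gsd \<omega> + 1) < grd \<omega>}"
  have Cx: "Cx^2 < 1"
    using assms(14,15) by (simp add: abs_square_less_1)
  have u: "0 \<le> u"
    using Psi_nonneg[of r Cx] Cx assms(12,13) by (simp add: u_def)
  have indep: "indep_var lborel grr lborel gsr" "indep_var lborel gsd lborel grd"
    using indep_var_of_indep_vars[OF assms(2), of 1 0] indep_var_of_indep_vars[OF assms(2), of 3 2] by simp_all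
  have pA: "exp (- source_relay_threshold r Cx (Pr * \<pi>rr) / (Ps * \<pi>sr)) \<le> prob EA"
    using prob_source_relay_success_ge[OF indep(1) assms(3,4,7,8,11,12)] assms(13) Cx by (simp add: EA_def)
  have pB: "prob EB = exp (- u / \<pi>rd) / (Ps * \<pi>sd * (u / \<pi>rd) + 1)"
    using prob_relay_destination_success[OF indep(2) assms(5,6,9,10) _ u] assms(11) by (simp add: EB_def)
  have [measurable]: "gsr \<in> borel_measurable M" "grr \<in> borel_measurable M"
      "grd \<in> borel_measurable M" "gsd \<in> borel_measurable M"
    using assms(3-6)[THEN distributed_measurable] by (simp_all add: measurable_lborel2)
  have events: "EA \<in> events" "EB \<in> events"
    unfolding EA_def EB_def by measurable
  have "Measurable.pred (borel \<Otimes>\<^sub>M borel) (\<lambda>p. 0 \<le> fst p \<and> source_relay_threshold r Cx (Pr * fst p) / Ps < snd p)"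
    "Measurable.pred (borel \<Otimes>\<^sub>M borel) (\<lambda>p. 0 \<le> fst p \<and> u * (Ps * fst p + 1) < snd p)"
    by measurable measurable
  from prob_pair_events_indep[OF assms(2) _ _ this, of 1 0 3 2]
  have indep_events: "prob (EA \<inter> EB) = prob EA * prob EB"
    by (simp add: EA_def EB_def)
  have "measure M {\<omega> \<in> space M. min (R_sr Ps Pr Cx (gsr \<omega>) (grr \<omega>)) (R_rd Ps Pr Cx (grd \<omega>) (gsd \<omega>)) < r}
      \<le> prob (space M - (EA \<inter> EB))"
    using outage_subset[OF assms(11,12) _ Cx, of r "space M"] assms(13) events
    by (intro finite_measure_mono) (auto simp: EA_def EB_def u_def)
  also have "\<dots> = 1 - prob EA * prob EB"
    using events indep_events by (simp add: prob_compl)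
  also have "\<dots> \<le> 1 - exp (- source_relay_threshold r Cx (Pr * \<pi>rr) / (Ps * \<pi>sr)) * prob EB"
    using mult_right_mono[OF pA measure_nonneg] by simp
  also have "\<dots> = P_UB r Ps Pr Cx \<pi>sr \<pi>rr \<pi>rd \<pi>sd"
    unfolding P_UB_eq pB u_def ..
  finally show ?thesis .
qed

end
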